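(* For all closed terms $t_0,t_1$ of $\lambda_S$, if $t_0\equiv t_1$ then $t_0\approx_{\emptyset}t_1$.
   Context: Terms of $\lambda_S$: $t ::= x \mid \lambda x.t \mid t\,t \mid \mathcal{S}k.t \mid \langle t\rangle$ (shift $\mathcal{S}k.t$ binds $k$, reset $\langle t\rangle$), up to $\alpha$-conversion; closed means no free variables. Values: $v ::= \lambda x.t$. Pure contexts $E ::= \Box \mid v\,E \mid E\,t$; evaluation contexts $F ::= \Box \mid v\,F \mid F\,t \mid \langle F\rangle$; contexts $C ::= \Box \mid \lambda x.C \mid t\,C \mid C\,t \mid \mathcal{S}k.C \mid \langle C\rangle$. Reduction: $F[(\lambda x.t)\,v] \to F[t\{v/x\}]$; $F[\langle E[\mathcal{S}k.t]\rangle] \to F[\langle t\{\lambda x.\langle E[x]\rangle/k\}\rangle]$ ($x\notin\mathrm{fv}(E)$); $F[\langle v\rangle]\to F[v]$. $\to^*$ reflexive-transitive closure; $t\Downarrow t'$ means $t\to^*t'$ with $t'$ irreducible. Stuck: not a value and irreducible; normal form: value or stuck term. Closures: for $R$ a relation on closed terms, $\widetilde R$ is the smallest relation containing $R$, all $(x,x)$, and closed under all term constructors, restricted to closed terms; $\widehat R$ is the smallest relation on closed evaluation contexts with $\Box\widehat R\Box$, $v_0F_0\widehat Rv_1F_1$ if $F_0\widehat RF_1,v_0\widetilde Rv_1$; $F_0t_0\widehat RF_1t_1$ if $F_0\widehat RF_1,t_0\widetilde Rt_1$; $\langle F_0\rangle\widehat R\langle F_1\rangle$ if $F_0\widehat RF_1$.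 Environmental bisimilarity: an environment $\mathcal E$ is a relation on closed normal forms relating values only with values and stuck terms only with stuck terms. An environmental relation $\mathcal X$ is a set of environments and triples $(\mathcal E,t_0,t_1)$ with $t_0,t_1$ closed, written $t_0\,\mathcal X_{\mathcal E}\,t_1$. $\mathcal X$ is an environmental bisimulation if (1) whenever $t_0\mathcal X_{\mathcal E}t_1$: (a) $t_0\to t_0'$ implies $t_1\to^*t_1'$ with $t_0'\mathcal X_{\mathcal E}t_1'$; (b) if $t_0$ is a value $v_0$ then $t_1\to^*v_1$, a value, and $\mathcal E\cup\{(v_0,v_1)\}\in\mathcal X$; (c) if $t_0$ is stuck then $t_1\to^*t_1'$ stuck and $\mathcal E\cup\{(t_0,t_1')\}\in\mathcal X$; (d) symmetric conditions for $t_1$; (2) whenever $\mathcal E\in\mathcal X$: (a) $(\lambda x.t_0)\mathcal E(\lambda x.t_1)$ and $v_0\widetilde{\mathcal E}v_1$ imply $t_0\{v_0/x\}\mathcal X_{\mathcal E}t_1\{v_1/x\}$; (b) $E_0[\mathcal Sk.t_0]\mathcal E E_1[\mathcal Sk.t_1]$ and pure contexts $E_0'\widehat{\mathcal E}E_1'$ imply $\langle t_0\{\lambda x.\langle E_0'[E_0[x]]\rangle/k\}\rangle\mathcal X_{\mathcal E}\langle t_1\{\lambda x.\langle E_1'[E_1[x]]\rangle/k\}\rangle$, $x$ fresh. $\approx$ is the largest environmental bisimulation, $t_0\approx_{\mathcal E}t_1$ meaning $(\mathcal E,t_0,t_1)\in\approx$. Contextual equivalence: $t_0\equiv t_1$ iff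 for all contexts $C$ with $C[t_0],C[t_1]$ closed, $C[t_0]\Downarrow$ a value iff $C[t_1]\Downarrow$ a value, and $C[t_0]\Downarrow$ a stuck term iff $C[t_1]\Downarrow$ a stuck term. *)

theory Defs
  imports Main
begin

text \<open>Terms up to alpha-conversion are represented with de Bruijn indices.
  Lam t binds index 0 in t (the variable x); Shift t binds index 0 in t
  (the continuation variable k); Reset t is the delimiter.\<close>

datatype trm = Var nat | Lam trm | App trm trm | Shift trm | Reset trm

fun closed_at :: "nat \<Rightarrow> trm \<Rightarrow> bool" where
  "closed_at k (Var i) = (i < k)"
| "closed_at k (Lam t) = closed_at (Suc k) t"
| "closed_at k (App t u) = (closed_at k t \<and> closed_at k u)"
| "closed_at k (Shift t) = closed_at (Suc k) t"
| "closed_at k (Reset t) = closed_at k t"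

definition closed :: "trm \<Rightarrow> bool" where
  "closed t = closed_at 0 t"

fun lift :: "nat \<Rightarrow> trm \<Rightarrow> trm" where
  "lift k (Var i) = (if i < k then Var i else Var (Suc i))"
| "lift k (Lam t) = Lam (lift (Suc k) t)"
| "lift k (App t u) = App (lift k t) (lift k u)"
| "lift k (Shift t) = Shift (lift (Suc k) t)"
| "lift k (Reset t) = Reset (lift k t)"

fun subst :: "trm \<Rightarrow> nat \<Rightarrow> trm \<Rightarrow> trm" where
  "subst (Var i) k s = (if i < k then Var i else if i = k then s else Var (i - 1))"
| "subst (Lam t) k s = Lam (subst t (Suc k) (lift 0 s))"
| "subst (App t u) k s = App (subst t k s) (subst u k s)"
| "subst (Shift t) k s = Shift (subst t (Suc k) (lift 0 s))"
| "subst (Reset t) k s = Reset (subst t k s)"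

text \<open>t{s/x} where x is the variable bound by the enclosing binder.\<close>
definition subst0 :: "trm \<Rightarrow> trm \<Rightarrow> trm" where
  "subst0 t s = subst t 0 s"

fun is_val :: "trm \<Rightarrow> bool" where
  "is_val (Lam t) = True"
| "is_val _ = False"

text \<open>Raw shape of evaluation contexts: hole, v F, F t, <F>.\<close>
datatype ectx = Hole | ArgC trm ectx | FunC ectx trm | ResetC ectx

fun plug :: "ectx \<Rightarrow> trm \<Rightarrow> trm" where
  "plug Hole t = t"
| "plug (ArgC v F) t = App v (plug F t)"
| "plug (FunC F u) t = App (plug F t) u"
| "plug (ResetC F) t = Reset (plug F t)"

fun lift_ctx :: "nat \<Rightarrow> ectx \<Rightarrow> ectx" where
  "lift_ctx k Hole = Hole"
| "lift_ctx k (ArgC v F) = ArgC (lift k v) (lift_ctx k F)"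
| "lift_ctx k (FunC F u) = FunC (lift_ctx k F) (lift k u)"
| "lift_ctx k (ResetC F) = ResetC (lift_ctx k F)"

fun evctx :: "ectx \<Rightarrow> bool" where
  "evctx Hole = True"
| "evctx (ArgC v F) = (is_val v \<and> evctx F)"
| "evctx (FunC F u) = evctx F"
| "evctx (ResetC F) = evctx F"

fun pure_ctx :: "ectx \<Rightarrow> bool" where
  "pure_ctx Hole = True"
| "pure_ctx (ArgC v F) = (is_val v \<and> pure_ctx F)"
| "pure_ctx (FunC F u) = pure_ctx F"
| "pure_ctx (ResetC F) = False"

inductive step :: "trm \<Rightarrow> trm \<Rightarrow> bool" where
  beta: "\<lbrakk>evctx F; is_val v\<rbrakk> \<Longrightarrow>
     step (plug F (App (Lam t) v)) (plug F (subst0 t v))"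
| shift: "\<lbrakk>evctx F; pure_ctx E\<rbrakk> \<Longrightarrow>
     step (plug F (Reset (plug E (Shift t))))
          (plug F (Reset (subst0 t (Lam (Reset (plug (lift_ctx 0 E) (Var 0)))))))"
| reset: "\<lbrakk>evctx F; is_val v\<rbrakk> \<Longrightarrow> step (plug F (Reset v)) (plug F v)"

abbreviation steps :: "trm \<Rightarrow> trm \<Rightarrow> bool" where
  "steps \<equiv> step\<^sup>*\<^sup>*"

definition irreducible :: "trm \<Rightarrow> bool" where
  "irreducible t = (\<nexists>u. step t u)"

definition stuck :: "trm \<Rightarrow> bool" where
  "stuck t = (\<not> is_val t \<and> irreducible t)"

definition normal_form :: "trm \<Rightarrow> bool" where
  "normal_form t = (is_val t \<or> stuck t)"

definition evals :: "trm \<Rightarrow> trm \<Rightarrow> bool" where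
  "evals t t' = (steps t t' \<and> irreducible t')"

datatype ctx = CHole | CLam ctx | CAppL ctx trm | CAppR trm ctx | CShift ctx | CReset ctx

text \<open>Plugging may capture variables (no shifting), as for contexts.\<close>
fun cplug :: "ctx \<Rightarrow> trm \<Rightarrow> trm" where
  "cplug CHole t = t"
| "cplug (CLam C) t = Lam (cplug C t)"
| "cplug (CAppL C u) t = App (cplug C t) u"
| "cplug (CAppR u C) t = App u (cplug C t)"
| "cplug (CShift C) t = Shift (cplug C t)"
| "cplug (CReset C) t = Reset (cplug C t)"

definition ctx_equiv :: "trm \<Rightarrow> trm \<Rightarrow> bool" where
  "ctx_equiv t0 t1 = (\<forall>C. closed (cplug C t0) \<and> closed (cplug C t1) \<longrightarrow>
      ((\<exists>v. evals (cplug C t0) v \<and> is_val v) \<longleftrightarrow> (\<exists>v. evals (cplug C t1) v \<and> is_val v)) \<and>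
      ((\<exists>s. evals (cplug C t0) s \<and> stuck s) \<longleftrightarrow> (\<exists>s. evals (cplug C t1) s \<and> stuck s)))"

inductive tclos :: "(trm \<times> trm) set \<Rightarrow> trm \<Rightarrow> trm \<Rightarrow> bool" for R where
  base: "(t0, t1) \<in> R \<Longrightarrow> tclos R t0 t1"
| var: "tclos R (Var x) (Var x)"
| lam: "tclos R t0 t1 \<Longrightarrow> tclos R (Lam t0) (Lam t1)"
| app: "tclos R t0 t1 \<Longrightarrow> tclos R u0 u1 \<Longrightarrow> tclos R (App t0 u0) (App t1 u1)"
| shft: "tclos R t0 t1 \<Longrightarrow> tclos R (Shift t0) (Shift t1)"
| rst: "tclos R t0 t1 \<Longrightarrow> tclos R (Reset t0) (Reset t1)"

definition tilde :: "(trm \<times> trm) set \<Rightarrow> (trm \<times> trm) set" where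
  "tilde R = {(t0, t1). tclos R t0 t1 \<and> closed t0 \<and> closed t1}"

inductive hat :: "(trm \<times> trm) set \<Rightarrow> ectx \<Rightarrow> ectx \<Rightarrow> bool" for R where
  hole: "hat R Hole Hole"
| arg: "\<lbrakk>hat R F0 F1; (v0, v1) \<in> tilde R; is_val v0; is_val v1\<rbrakk>
        \<Longrightarrow> hat R (ArgC v0 F0) (ArgC v1 F1)"
| func: "\<lbrakk>hat R F0 F1; (t0, t1) \<in> tilde R\<rbrakk> \<Longrightarrow> hat R (FunC F0 t0) (FunC F1 t1)"
| rst: "hat R F0 F1 \<Longrightarrow> hat R (ResetC F0) (ResetC F1)"

definition environment :: "(trm \<times> trm) set \<Rightarrow> bool" where
  "environment E = (\<forall>(t0, t1) \<in> E. closed t0 \<and> closed t1 \<and>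
      ((is_val t0 \<and> is_val t1) \<or> (stuck t0 \<and> stuck t1)))"

text \<open>An environmental relation: a set of environments together with a set of
  triples (E, t0, t1), the latter written \<open>t0 X_E t1\<close>.\<close>
type_synonym envrel = "(trm \<times> trm) set set \<times> ((trm \<times> trm) set \<times> trm \<times> trm) set"

definition env_relation :: "envrel \<Rightarrow> bool" where
  "env_relation X = ((\<forall>E \<in> fst X. environment E) \<and>
      (\<forall>(E, t0, t1) \<in> snd X. environment E \<and> closed t0 \<and> closed t1))"

definition env_bisim :: "envrel \<Rightarrow> bool" where
  "env_bisim X = (env_relation X \<and>
    (\<forall>E t0 t1. (E, t0, t1) \<in> snd X \<longrightarrow>
       (\<forall>t0'. step t0 t0' \<longrightarrow> (\<exists>t1'. steps t1 t1' \<and> (E, t0', t1') \<in> snd X)) \<and>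
       (is_val t0 \<longrightarrow> (\<exists>v1. steps t1 v1 \<and> is_val v1 \<and> insert (t0, v1) E \<in> fst X)) \<and>
       (stuck t0 \<longrightarrow> (\<exists>t1'. steps t1 t1' \<and> stuck t1' \<and> insert (t0, t1') E \<in> fst X)) \<and>
       (\<forall>t1'. step t1 t1' \<longrightarrow> (\<exists>t0'. steps t0 t0' \<and> (E, t0', t1') \<in> snd X)) \<and>
       (is_val t1 \<longrightarrow> (\<exists>v0. steps t0 v0 \<and> is_val v0 \<and> insert (v0, t1) E \<in> fst X)) \<and>
       (stuck t1 \<longrightarrow> (\<exists>t0'. steps t0 t0' \<and> stuck t0' \<and> insert (t0', t1) E \<in> fst X))) \<and>
    (\<forall>E \<in> fst X.
       (\<forall>b0 b1 v0 v1. (Lam b0, Lam b1) \<in> E \<and> (v0, v1) \<in> tilde E \<and> is_val v0 \<and> is_val v1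
          \<longrightarrow> (E, subst0 b0 v0, subst0 b1 v1) \<in> snd X) \<and>
       (\<forall>E0 E1 s0 s1 E0' E1'.
          pure_ctx E0 \<and> pure_ctx E1 \<and> (plug E0 (Shift s0), plug E1 (Shift s1)) \<in> E \<and>
          pure_ctx E0' \<and> pure_ctx E1' \<and> hat E E0' E1'
          \<longrightarrow> (E, Reset (subst0 s0 (Lam (Reset (plug (lift_ctx 0 E0') (plug (lift_ctx 0 E0) (Var 0)))))),
                  Reset (subst0 s1 (Lam (Reset (plug (lift_ctx 0 E1') (plug (lift_ctx 0 E1) (Var 0)))))))
              \<in> snd X)))"

text \<open>\<open>t0 \<approx>_E t1\<close>: the triple belongs to the largest environmental bisimulation,
  i.e. to some environmental bisimulation.\<close>
definition env_bisimilar :: "(trm \<times> trm) set \<Rightarrow> trm \<Rightarrow> trm \<Rightarrow> bool" where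
  "env_bisimilar E t0 t1 = (\<exists>X. env_bisim X \<and> (E, t0, t1) \<in> snd X)"

end

theory Submission
  imports Defs
begin

text \<open>Contextual equivalence, with its environments restricted to pairs of contextually
  equivalent normal forms, is itself an environmental bisimulation.  Its clauses reduce to three
  facts.  Reduction is contained in contextual equivalence: a term and its reduct, placed in an
  arbitrary context, are related by the compatible closure of the reduction pair, and because
  reduction is deterministic this closure is a simulation in both directions that preserves the
  kind of normal form reached.  Contextual equivalence is transitive on closed terms.  And it is
  a congruence, so it contains the compatible closure of every environment whose pairs it
  contains; this covers the two environment clauses, whose terms are reducts of related terms.\<close>

section \<open>Structural presentation of reduction\<close>

inductive red :: "trm \<Rightarrow> trm \<Rightarrow> bool" where
  beta: "is_val v \<Longrightarrow> red (App (Lam b) v) (subst0 b v)"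
| shift: "pure_ctx E \<Longrightarrow> red (Reset (plug E (Shift s)))
      (Reset (subst0 s (Lam (Reset (plug (lift_ctx 0 E) (Var 0))))))"
| reset: "is_val v \<Longrightarrow> red (Reset v) v"
| app_fun: "red t t' \<Longrightarrow> red (App t u) (App t' u)"
| app_arg: "is_val v \<Longrightarrow> red u u' \<Longrightarrow> red (App v u) (App v u')"
| in_reset: "red t t' \<Longrightarrow> red (Reset t) (Reset t')"

lemma is_val_iff: "is_val v \<longleftrightarrow> (\<exists>b. v = Lam b)"
  by (cases v) auto

fun ecomp :: "ectx \<Rightarrow> ectx \<Rightarrow> ectx" where
  "ecomp Hole D = D"
| "ecomp (ArgC v F) D = ArgC v (ecomp F D)"
| "ecomp (FunC F u) D = FunC (ecomp F D) u"
| "ecomp (ResetC F) D = ResetC (ecomp F D)"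

lemma plug_ecomp [simp]: "plug (ecomp F G) x = plug F (plug G x)"
  by (induction F) auto

lemma evctx_ecomp: "evctx F \<Longrightarrow> evctx G \<Longrightarrow> evctx (ecomp F G)"
  by (induction F) auto

lemma pure_ctx_ecomp: "pure_ctx F \<Longrightarrow> pure_ctx G \<Longrightarrow> pure_ctx (ecomp F G)"
  by (induction F) auto

lemma lift_ctx_ecomp [simp]: "lift_ctx k (ecomp F G) = ecomp (lift_ctx k F) (lift_ctx k G)"
  by (induction F) auto

lemma red_plug: "evctx F \<Longrightarrow> red t t' \<Longrightarrow> red (plug F t) (plug F t')"
  by (induction F) (auto intro: red.intros)

lemma step_plug:
  assumes "evctx G"
  shows "step t t' \<Longrightarrow> step (plug G t) (plug G t')"
proof (induction rule: step.induct)
  case (beta F v b)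
  then show ?case using step.beta[of "ecomp G F" v b] assms by (simp add: evctx_ecomp)
next
  case (shift F E s)
  then show ?case using step.shift[of "ecomp G F" E s] assms by (simp add: evctx_ecomp)
next
  case (reset F v)
  then show ?case using step.reset[of "ecomp G F" v] assms by (simp add: evctx_ecomp)
qed

lemma step_eq_red: "step = red"
proof (intro ext iffI)
  fix t t' assume "step t t'"
  then show "red t t'" by induction (auto intro: red_plug red.intros)
next
  fix t t' assume "red t t'"
  then show "step t t'"
  proof induction
    case (beta v b)
    then show ?case using step.beta[of Hole v b] by simp
  next
    case (shift E s)
    then show ?case using step.shift[of Hole E s] by simp
  next
    case (reset v)
    then show ?case using step.reset[of Hole v] by simp
  next
    case (app_fun t t' u)
    then show ?case using step_plug[of "FunC Hole u"] by simp
  next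
    case (app_arg v u u')
    then show ?case using step_plug[of "ArgC v Hole"] by simp
  next
    case (in_reset t t')
    then show ?case using step_plug[of "ResetC Hole"] by simp
  qed
qed

lemma irreducible_iff: "irreducible t \<longleftrightarrow> (\<nexists>u. red t u)"
  by (simp add: irreducible_def step_eq_red)

lemma rtranclp_red_plug:
  assumes "evctx F"
  shows "red\<^sup>*\<^sup>* t t' \<Longrightarrow> red\<^sup>*\<^sup>* (plug F t) (plug F t')"
  by (induction rule: rtranclp_induct) (auto intro: rtranclp.rtrancl_into_rtrancl red_plug assms)

lemma tranclp_red_plug:
  assumes "evctx F"
  shows "red\<^sup>+\<^sup>+ t t' \<Longrightarrow> red\<^sup>+\<^sup>+ (plug F t) (plug F t')"
  by (induction rule: tranclp_induct) (auto intro: tranclp.trancl_into_trancl red_plug assms)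

section \<open>Determinism\<close>

lemma val_no_red: "is_val v \<Longrightarrow> \<not> red v u"
  by (auto simp: is_val_iff elim: red.cases)

lemma Lam_no_red [simp]: "\<not> red (Lam b) u"
  by (auto elim: red.cases)

lemma plug_Shift_not_val [simp]: "\<not> is_val (plug E (Shift s))"
  by (cases E) auto

lemma plug_Shift_not_Lam [simp]: "plug E (Shift s) \<noteq> Lam b"
  by (cases E) auto

lemma plug_Shift_no_red: "pure_ctx E \<Longrightarrow> \<not> red (plug E (Shift s)) u"
  by (induction E arbitrary: u) (auto elim: red.cases dest: val_no_red)

lemma plug_Shift_inj:
  "pure_ctx E \<Longrightarrow> pure_ctx E' \<Longrightarrow> plug E (Shift s) = plug E' (Shift s') \<Longrightarrow> E = E' \<and> s = s'"
proof (induction E arbitrary: E')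
  case Hole
  then show ?case by (cases E') auto
next
  case (ArgC v F)
  then show ?case by (cases E') auto
next
  case (FunC F u)
  then show ?case by (cases E') auto
qed simp

lemma red_deterministic: "red a b \<Longrightarrow> red a c \<Longrightarrow> b = c"
proof (induction arbitrary: c rule: red.induct)
  case (beta v b)
  from beta.prems beta.hyps show ?case by cases (auto dest: val_no_red)
next
  case (shift E s)
  from shift.prems shift.hyps show ?case
    by cases (auto dest: plug_Shift_inj plug_Shift_no_red)
next
  case (reset v)
  from reset.prems show ?case using reset.hyps by cases (auto dest: val_no_red)
next
  case (app_fun t t' u)
  from app_fun.prems show ?case
  proof cases
    case (app_fun t'')
    then show ?thesis using app_fun.IH by blast
  qed (use app_fun.hyps val_no_red in auto)
next
  case (app_arg v u u')
  from app_arg.prems show ?case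
  proof cases
    case (app_arg u'')
    then show ?thesis using app_arg.IH by blast
  qed (use app_arg.hyps val_no_red in auto)
next
  case (in_reset t t')
  from in_reset.prems show ?case
  proof cases
    case (in_reset t'')
    then show ?thesis using in_reset.IH by blast
  qed (use in_reset.hyps val_no_red plug_Shift_no_red in auto)
qed

lemma closed_at_mono: "closed_at k t \<Longrightarrow> k \<le> j \<Longrightarrow> closed_at j t"
  by (induction t arbitrary: k j) auto

lemma closed_imp_closed_at: "closed t \<Longrightarrow> closed_at k t"
  unfolding closed_def using closed_at_mono by blast

lemma lift_closed_at: "closed_at k t \<Longrightarrow> k \<le> j \<Longrightarrow> lift j t = t"
  by (induction t arbitrary: k j) auto

lemma subst_closed_at: "closed_at k t \<Longrightarrow> k \<le> j \<Longrightarrow> subst t j s = t"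
  by (induction t arbitrary: k j s) auto

lemma lift_closed: "closed t \<Longrightarrow> lift j t = t"
  unfolding closed_def using lift_closed_at by blast

lemma subst_closed: "closed t \<Longrightarrow> subst t j s = t"
  unfolding closed_def using subst_closed_at by blast

lemma closed_at_lift: "closed_at k s \<Longrightarrow> closed_at (Suc k) (lift j s)"
  by (induction s arbitrary: k j) auto

lemma closed_at_subst:
  "closed_at (Suc k) t \<Longrightarrow> j \<le> k \<Longrightarrow> closed_at k s \<Longrightarrow> closed_at k (subst t j s)"
  by (induction t arbitrary: k j s) (auto simp: closed_at_lift)

fun ctx_closed_at :: "nat \<Rightarrow> ectx \<Rightarrow> bool" where
  "ctx_closed_at k Hole = True"
| "ctx_closed_at k (ArgC v F) = (closed_at k v \<and> ctx_closed_at k F)"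
| "ctx_closed_at k (FunC F u) = (closed_at k u \<and> ctx_closed_at k F)"
| "ctx_closed_at k (ResetC F) = ctx_closed_at k F"

lemma closed_at_plug [simp]: "closed_at k (plug F x) \<longleftrightarrow> ctx_closed_at k F \<and> closed_at k x"
  by (induction F) auto

lemma ctx_closed_at_lift: "ctx_closed_at k F \<Longrightarrow> ctx_closed_at (Suc k) (lift_ctx j F)"
  by (induction F) (auto simp: closed_at_lift)

lemma red_closed_at: "red a b \<Longrightarrow> closed_at k a \<Longrightarrow> closed_at k b"
proof (induction arbitrary: k rule: red.induct)
  case (beta v b)
  then show ?case by (auto simp: subst0_def intro: closed_at_subst)
next
  case (shift E s)
  then show ?case by (auto simp: subst0_def intro!: closed_at_subst ctx_closed_at_lift)
qed auto

lemma red_closed: "red a b \<Longrightarrow> closed a \<Longrightarrow> closed b"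
  unfolding closed_def by (rule red_closed_at)

lemma reds_closed: "red\<^sup>*\<^sup>* a b \<Longrightarrow> closed a \<Longrightarrow> closed b"
  by (induction rule: rtranclp_induct) (auto intro: red_closed)

lemma progress:
  "closed_at 0 t \<Longrightarrow> is_val t \<or> (\<exists>u. red t u) \<or> (\<exists>E s. pure_ctx E \<and> t = plug E (Shift s))"
proof (induction t)
  case (App t u)
  then consider "is_val t" "is_val u" | "is_val t" "\<exists>u'. red u u'"
    | "is_val t" "\<exists>E s. pure_ctx E \<and> u = plug E (Shift s)" | "\<exists>t'. red t t'"
    | "\<exists>E s. pure_ctx E \<and> t = plug E (Shift s)"
    by (simp; blast)
  then show ?case
  proof cases
    case 1
    then obtain b where "t = Lam b" by (auto simp: is_val_iff)
    then show ?thesis using 1 red.beta by blast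
  next
    case 3
    then obtain E s where "pure_ctx E" "u = plug E (Shift s)" by blast
    then show ?thesis using 3 by (intro disjI2) (rule exI[of _ "ArgC t E"], auto)
  next
    case 5
    then obtain E s where "pure_ctx E" "t = plug E (Shift s)" by blast
    then show ?thesis by (intro disjI2) (rule exI[of _ "FunC E u"], auto)
  qed (auto intro: red.intros)
next
  case (Shift t)
  then show ?case by (intro disjI2) (rule exI[of _ Hole], auto)
next
  case (Reset t)
  then show ?case by (auto intro: red.intros)
qed auto

lemma tclos_refl: "tclos R x x"
  by (induction x) (auto intro: tclos.intros)

lemma tclos_cplug: "tclos R x y \<Longrightarrow> tclos R (cplug C x) (cplug C y)"
  by (induction C) (auto intro: tclos.intros tclos_refl)

definition closed_rel :: "(trm \<times> trm) set \<Rightarrow> bool" where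
  "closed_rel R \<longleftrightarrow> (\<forall>(a, b) \<in> R. closed a \<and> closed b)"

lemma tclos_lift: "tclos R x y \<Longrightarrow> closed_rel R \<Longrightarrow> tclos R (lift k x) (lift k y)"
proof (induction arbitrary: k rule: tclos.induct)
  case (base t0 t1)
  then have "closed t0" "closed t1" by (auto simp: closed_rel_def)
  then show ?case using base(1) by (simp add: lift_closed tclos.base)
qed (auto intro: tclos.intros)

lemma tclos_subst:
  "tclos R x y \<Longrightarrow> closed_rel R \<Longrightarrow> tclos R u v \<Longrightarrow> tclos R (subst x k u) (subst y k v)"
proof (induction arbitrary: k u v rule: tclos.induct)
  case (base t0 t1)
  then have "closed t0" "closed t1" by (auto simp: closed_rel_def)
  then show ?case using base(1) by (simp add: subst_closed tclos.base)
next
  case (lam t0 t1)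
  then show ?case by (simp add: tclos.lam tclos_lift)
next
  case (shft t0 t1)
  then show ?case by (simp add: tclos.shft tclos_lift)
qed (auto intro: tclos.intros)

lemma tclos_subst0:
  "closed_rel R \<Longrightarrow> tclos R x y \<Longrightarrow> tclos R u v \<Longrightarrow> tclos R (subst0 x u) (subst0 y v)"
  unfolding subst0_def by (rule tclos_subst)

lemma tclos_closed_at_eq: "tclos R x y \<Longrightarrow> closed_rel R \<Longrightarrow> closed_at k x = closed_at k y"
  by (induction arbitrary: k rule: tclos.induct)
    (auto simp: closed_rel_def intro: closed_imp_closed_at)

section \<open>Simulation by the compatible closure of a reduction step\<close>

locale red_pair =
  fixes t t' :: trm
  assumes t_red: "red t t'" and t_closed: "closed t"
begin

abbreviation S :: "trm \<Rightarrow> trm \<Rightarrow> bool" where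
  "S \<equiv> tclos {(t, t')}"

lemma closed_rel_pair: "closed_rel {(t, t')}"
  using t_closed red_closed[OF t_red t_closed] by (simp add: closed_rel_def)

lemma t_not_val: "\<not> is_val t"
  using t_red val_no_red by blast

lemma t_not_plug_Shift: "pure_ctx E \<Longrightarrow> t \<noteq> plug E (Shift s)"
  using t_red plug_Shift_no_red by blast

lemma red_t_unique: "red t a \<Longrightarrow> a = t'"
  using t_red red_deterministic by blast

lemma S_App_cases:
  "S (App x u) y \<Longrightarrow> (App x u = t \<and> y = t') \<or> (\<exists>x' u'. y = App x' u' \<and> S x x' \<and> S u u')"
  by (erule tclos.cases) auto

lemma S_Reset_cases:
  "S (Reset x) y \<Longrightarrow> (Reset x = t \<and> y = t') \<or> (\<exists>x'. y = Reset x' \<and> S x x')"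
  by (erule tclos.cases) auto

lemma S_App_cases_right:
  "S y (App x u) \<Longrightarrow> (y = t \<and> App x u = t') \<or> (\<exists>x' u'. y = App x' u' \<and> S x' x \<and> S u' u)"
  by (erule tclos.cases) auto

lemma S_Reset_cases_right:
  "S y (Reset x) \<Longrightarrow> (y = t \<and> Reset x = t') \<or> (\<exists>x'. y = Reset x' \<and> S x' x)"
  by (erule tclos.cases) auto

lemma S_Lam: "S (Lam b) y \<Longrightarrow> \<exists>b'. y = Lam b' \<and> S b b'"
  by (erule tclos.cases) (use t_not_val in auto)

lemma S_Lam_right: "S x (Lam b) \<Longrightarrow> is_val x \<Longrightarrow> \<exists>b'. x = Lam b' \<and> S b' b"
  by (erule tclos.cases) (use t_not_val in auto)

lemma S_val: "S v y \<Longrightarrow> is_val v \<Longrightarrow> is_val y"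
  using S_Lam by (auto simp: is_val_iff)

lemma S_val_right:
  assumes "S x v" "is_val v"
  shows "\<exists>x'. red\<^sup>=\<^sup>= x x' \<and> is_val x' \<and> S x' v"
  using assms(1)
proof cases
  case base
  then show ?thesis using assms(2) t_red tclos_refl by auto
qed (use assms in auto)

lemma S_plug_Shift:
  "pure_ctx E \<Longrightarrow> S (plug E (Shift s)) X \<Longrightarrow>
    \<exists>E' s'. X = plug E' (Shift s') \<and> pure_ctx E' \<and> S s s' \<and>
      S (plug (lift_ctx 0 E) (Var 0)) (plug (lift_ctx 0 E') (Var 0))"
proof (induction E arbitrary: X)
  case Hole
  from Hole.prems(2) show ?case
  proof (cases rule: tclos.cases)
    case (shft s0 s1)
    then show ?thesis by (intro exI[of _ Hole] exI[of _ s1]) (auto intro: tclos.var)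
  qed (use t_not_plug_Shift[of Hole s] in auto)
next
  case (ArgC v F)
  from ArgC.prems(2) show ?case
  proof (cases rule: tclos.cases)
    case (app v0 v1 u0 u1)
    with ArgC.prems(1) have "is_val v1" "S v v1" using S_val by auto
    from ArgC.IH[of u1] app ArgC.prems(1) obtain E' s' where
      "u1 = plug E' (Shift s')" "pure_ctx E'" "S s s'"
      "S (plug (lift_ctx 0 F) (Var 0)) (plug (lift_ctx 0 E') (Var 0))"
      by auto
    with app \<open>is_val v1\<close> \<open>S v v1\<close> show ?thesis
      by (intro exI[of _ "ArgC v1 E'"] exI[of _ s'])
        (auto intro: tclos.app tclos_lift closed_rel_pair)
  qed (use ArgC.prems t_not_plug_Shift[of "ArgC v F" s] in auto)
next
  case (FunC F u)
  from FunC.prems(2) show ?case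
  proof (cases rule: tclos.cases)
    case (app t0 t1 u0 u1)
    from FunC.IH[of t1] app FunC.prems(1) obtain E' s' where
      "t1 = plug E' (Shift s')" "pure_ctx E'" "S s s'"
      "S (plug (lift_ctx 0 F) (Var 0)) (plug (lift_ctx 0 E') (Var 0))"
      by auto
    with app show ?thesis
      by (intro exI[of _ "FunC E' u1"] exI[of _ s'])
        (auto intro: tclos.app tclos_lift closed_rel_pair)
  qed (use FunC.prems t_not_plug_Shift[of "FunC F u" s] in auto)
qed simp

lemma S_plug_Shift_right:
  "pure_ctx E \<Longrightarrow> S X (plug E (Shift s)) \<Longrightarrow>
    \<exists>E' s'. red\<^sup>*\<^sup>* X (plug E' (Shift s')) \<and> pure_ctx E' \<and> S s' s \<and>
      S (plug (lift_ctx 0 E') (Var 0)) (plug (lift_ctx 0 E) (Var 0))"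
proof (induction E arbitrary: X)
  case Hole
  from Hole.prems(2) show ?case
  proof (cases rule: tclos.cases)
    case base
    then show ?thesis using t_red by (intro exI[of _ Hole] exI[of _ s]) (auto intro: tclos_refl)
  next
    case (shft s0 s1)
    then show ?thesis by (intro exI[of _ Hole] exI[of _ s0]) (auto intro: tclos.var)
  qed auto
next
  case (ArgC v F)
  from ArgC.prems(2) show ?case
  proof (cases rule: tclos.cases)
    case base
    then show ?thesis using t_red ArgC.prems(1)
      by (intro exI[of _ "ArgC v F"] exI[of _ s]) (auto intro: tclos_refl simp del: plug.simps)
  next
    case (app v0 v1 u0 u1)
    with ArgC.prems(1) obtain v' where v': "red\<^sup>=\<^sup>= v0 v'" "is_val v'" "S v' v"
      using S_val_right by auto
    from ArgC.IH[of u0] app ArgC.prems(1) obtain E' s' where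
      E': "red\<^sup>*\<^sup>* u0 (plug E' (Shift s'))" "pure_ctx E'" "S s' s"
      "S (plug (lift_ctx 0 E') (Var 0)) (plug (lift_ctx 0 F) (Var 0))"
      by auto
    have "red\<^sup>*\<^sup>* X (App v' u0)"
      using rtranclp_red_plug[of "FunC Hole u0"] v'(1) app by auto
    also have "red\<^sup>*\<^sup>* \<dots> (App v' (plug E' (Shift s')))"
      using rtranclp_red_plug[of "ArgC v' Hole"] v'(2) E'(1) by auto
    finally show ?thesis using v' E' app
      by (intro exI[of _ "ArgC v' E'"] exI[of _ s'])
        (auto intro: tclos.app tclos_lift closed_rel_pair)
  qed auto
next
  case (FunC F u)
  from FunC.prems(2) show ?case
  proof (cases rule: tclos.cases)
    case base
    then show ?thesis using t_red FunC.prems(1)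
      by (intro exI[of _ "FunC F u"] exI[of _ s]) (auto intro: tclos_refl simp del: plug.simps)
  next
    case (app t0 t1 u0 u1)
    from FunC.IH[of t0] app FunC.prems(1) obtain E' s' where
      E': "red\<^sup>*\<^sup>* t0 (plug E' (Shift s'))" "pure_ctx E'" "S s' s"
      "S (plug (lift_ctx 0 E') (Var 0)) (plug (lift_ctx 0 F) (Var 0))"
      by auto
    have "red\<^sup>*\<^sup>* X (App (plug E' (Shift s')) u0)"
      using rtranclp_red_plug[of "FunC Hole u0"] E'(1) app by auto
    then show ?thesis using E' app
      by (intro exI[of _ "FunC E' u0"] exI[of _ s'])
        (auto intro: tclos.app tclos_lift closed_rel_pair)
  qed auto
qed simp

lemma S_red_t: "red a a' \<Longrightarrow> a = t \<Longrightarrow> S a' t'"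
  using red_t_unique tclos_refl by blast

lemma S_beta_left:
  assumes "is_val v" "S (App (Lam bd) v) b"
  shows "S (subst0 bd v) b \<or> (\<exists>b'. red b b' \<and> S (subst0 bd v) b')"
  using S_App_cases[OF assms(2)]
proof (elim disjE exE conjE)
  assume "App (Lam bd) v = t" "b = t'"
  then show ?thesis using S_red_t[OF red.beta[OF assms(1)]] by auto
next
  fix f u assume app: "b = App f u" "S (Lam bd) f" "S v u"
  then obtain bd' where bd': "f = Lam bd'" "S bd bd'" using S_Lam by blast
  have "is_val u" using S_val app assms(1) by auto
  then have "red b (subst0 bd' u)" using app bd' by (simp add: red.beta)
  moreover have "S (subst0 bd v) (subst0 bd' u)"
    using tclos_subst0[OF closed_rel_pair bd'(2)] app by auto
  ultimately show ?thesis by blast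
qed

lemma S_shift_left:
  assumes "pure_ctx E" "S (Reset (plug E (Shift s))) b"
  defines "r \<equiv> Reset (subst0 s (Lam (Reset (plug (lift_ctx 0 E) (Var 0)))))"
  shows "S r b \<or> (\<exists>b'. red b b' \<and> S r b')"
  using S_Reset_cases[OF assms(2)]
proof (elim disjE exE conjE)
  assume "Reset (plug E (Shift s)) = t" "b = t'"
  then show ?thesis using S_red_t[OF red.shift[OF assms(1)]] by (auto simp: r_def)
next
  fix x assume rst: "b = Reset x" "S (plug E (Shift s)) x"
  then obtain E' s' where E': "x = plug E' (Shift s')" "pure_ctx E'" "S s s'"
    "S (plug (lift_ctx 0 E) (Var 0)) (plug (lift_ctx 0 E') (Var 0))"
    using S_plug_Shift[OF assms(1)] by blast
  have "red b (Reset (subst0 s' (Lam (Reset (plug (lift_ctx 0 E') (Var 0))))))"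
    using rst E' by (simp add: red.shift)
  moreover have "S r (Reset (subst0 s' (Lam (Reset (plug (lift_ctx 0 E') (Var 0))))))"
    unfolding r_def using E' by (auto intro!: tclos.rst tclos.lam tclos_subst0[OF closed_rel_pair])
  ultimately show ?thesis by blast
qed

lemma S_red_left: "red a a' \<Longrightarrow> S a b \<Longrightarrow> S a' b \<or> (\<exists>b'. red b b' \<and> S a' b')"
proof (induction arbitrary: b rule: red.induct)
  case (beta v bd)
  then show ?case by (rule S_beta_left)
next
  case (shift E s)
  then show ?case by (rule S_shift_left)
next
  case (reset v)
  from S_Reset_cases[OF reset.prems] show ?case
    using reset.hyps S_red_t[OF red.reset[OF reset.hyps]] S_val by (auto intro: red.reset)
next
  case (app_fun f f' u)
  from S_App_cases[OF app_fun.prems] show ?case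
    using app_fun S_red_t[OF red.app_fun[OF app_fun.hyps]] by (blast intro: tclos.app red.app_fun)
next
  case (app_arg v u u')
  from S_App_cases[OF app_arg.prems] show ?case
    using app_arg S_red_t[OF red.app_arg[OF app_arg.hyps]] S_val
    by (blast intro: tclos.app red.app_arg)
next
  case (in_reset x x')
  from S_Reset_cases[OF in_reset.prems] show ?case
    using in_reset S_red_t[OF red.in_reset[OF in_reset.hyps]] by (blast intro: tclos.rst red.in_reset)
qed

lemma red_t'_S: "red b b' \<Longrightarrow> b = t' \<Longrightarrow> \<exists>a. red\<^sup>+\<^sup>+ t a \<and> S a b'"
  using t_red tclos_refl by (blast intro: tranclp.trancl_into_trancl)

lemma S_beta_right:
  assumes "is_val v" "S a (App (Lam bd) v)"
  shows "\<exists>a'. red\<^sup>+\<^sup>+ a a' \<and> S a' (subst0 bd v)"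
  using S_App_cases_right[OF assms(2)]
proof (elim disjE exE conjE)
  assume "a = t" "App (Lam bd) v = t'"
  then show ?thesis using red_t'_S[OF red.beta[OF assms(1)]] by auto
next
  fix f u assume app: "a = App f u" "S f (Lam bd)" "S u v"
  then obtain f' where f': "red\<^sup>=\<^sup>= f f'" "is_val f'" "S f' (Lam bd)"
    using S_val_right by force
  then obtain bd' where bd': "f' = Lam bd'" "S bd' bd" using S_Lam_right by blast
  obtain u' where u': "red\<^sup>=\<^sup>= u u'" "is_val u'" "S u' v" using S_val_right app assms(1) by blast
  have "red\<^sup>*\<^sup>* a (App f' u)"
    using rtranclp_red_plug[of "FunC Hole u"] f'(1) app by auto
  also have "red\<^sup>*\<^sup>* \<dots> (App f' u')"
    using rtranclp_red_plug[of "ArgC f' Hole"] f'(2) u'(1) by auto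
  finally have "red\<^sup>+\<^sup>+ a (subst0 bd' u')"
    using bd'(1) u'(2) by (auto intro: rtranclp_into_tranclp1 red.beta)
  moreover have "S (subst0 bd' u') (subst0 bd v)"
    using tclos_subst0[OF closed_rel_pair bd'(2) u'(3)] .
  ultimately show ?thesis by blast
qed

lemma S_shift_right:
  assumes "pure_ctx E" "S a (Reset (plug E (Shift s)))"
  defines "r \<equiv> Reset (subst0 s (Lam (Reset (plug (lift_ctx 0 E) (Var 0)))))"
  shows "\<exists>a'. red\<^sup>+\<^sup>+ a a' \<and> S a' r"
  using S_Reset_cases_right[OF assms(2)]
proof (elim disjE exE conjE)
  assume "a = t" "Reset (plug E (Shift s)) = t'"
  then show ?thesis using red_t'_S[OF red.shift[OF assms(1)]] by (auto simp: r_def)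
next
  fix x assume rst: "a = Reset x" "S x (plug E (Shift s))"
  then obtain E' s' where E': "red\<^sup>*\<^sup>* x (plug E' (Shift s'))" "pure_ctx E'" "S s' s"
    "S (plug (lift_ctx 0 E') (Var 0)) (plug (lift_ctx 0 E) (Var 0))"
    using S_plug_Shift_right[OF assms(1)] by blast
  have "red\<^sup>*\<^sup>* a (Reset (plug E' (Shift s')))"
    using rtranclp_red_plug[of "ResetC Hole"] E'(1) rst by auto
  then have "red\<^sup>+\<^sup>+ a (Reset (subst0 s' (Lam (Reset (plug (lift_ctx 0 E') (Var 0))))))"
    using E'(2) by (auto intro: rtranclp_into_tranclp1 red.shift)
  moreover have "S (Reset (subst0 s' (Lam (Reset (plug (lift_ctx 0 E') (Var 0)))))) r"
    unfolding r_def using E' by (auto intro!: tclos.rst tclos.lam tclos_subst0[OF closed_rel_pair])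
  ultimately show ?thesis by blast
qed

lemma S_reset_right:
  assumes "is_val v" "S a (Reset v)"
  shows "\<exists>a'. red\<^sup>+\<^sup>+ a a' \<and> S a' v"
  using S_Reset_cases_right[OF assms(2)]
proof (elim disjE exE conjE)
  assume "a = t" "Reset v = t'"
  then show ?thesis using red_t'_S[OF red.reset[OF assms(1)]] by auto
next
  fix x assume rst: "a = Reset x" "S x v"
  then obtain x' where x': "red\<^sup>=\<^sup>= x x'" "is_val x'" "S x' v"
    using S_val_right assms(1) by blast
  have "red\<^sup>*\<^sup>* a (Reset x')"
    using rtranclp_red_plug[of "ResetC Hole"] x'(1) rst by auto
  then have "red\<^sup>+\<^sup>+ a x'" using x'(2) by (auto intro: rtranclp_into_tranclp1 red.reset)
  then show ?thesis using x'(3) by blast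
qed

lemma S_red_right: "red b b' \<Longrightarrow> S a b \<Longrightarrow> \<exists>a'. red\<^sup>+\<^sup>+ a a' \<and> S a' b'"
proof (induction arbitrary: a rule: red.induct)
  case (beta v bd)
  then show ?case by (rule S_beta_right)
next
  case (shift E s)
  then show ?case by (rule S_shift_right)
next
  case (reset v)
  then show ?case by (rule S_reset_right)
next
  case (app_fun f f' u)
  have "\<exists>a'. red\<^sup>+\<^sup>+ (App g w) a' \<and> S a' (App f' u)" if "S g f" "S w u" for g w
    using app_fun.IH[OF that(1)] tranclp_red_plug[of "FunC Hole w"] that(2)
    by (auto intro: tclos.app)
  with S_App_cases_right[OF app_fun.prems] show ?case
    using red_t'_S[OF red.app_fun[OF app_fun.hyps]] by blast
next
  case (app_arg v u u')
  have "\<exists>a'. red\<^sup>+\<^sup>+ (App w x) a' \<and> S a' (App v u')" if wv: "S w v" and xu: "S x u" for w x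
  proof -
    obtain w' where w': "red\<^sup>=\<^sup>= w w'" "is_val w'" "S w' v"
      using S_val_right[OF wv] app_arg.hyps by blast
    from app_arg.IH[OF xu] obtain x' where x': "red\<^sup>+\<^sup>+ x x'" "S x' u'" by blast
    have "red\<^sup>*\<^sup>* (App w x) (App w' x)"
      using rtranclp_red_plug[of "FunC Hole x"] w'(1) by auto
    also have "red\<^sup>+\<^sup>+ \<dots> (App w' x')"
      using tranclp_red_plug[of "ArgC w' Hole"] w'(2) x'(1) by auto
    finally show ?thesis using w'(3) x'(2) by (auto intro: tclos.app)
  qed
  with S_App_cases_right[OF app_arg.prems] show ?case
    using red_t'_S[OF red.app_arg[OF app_arg.hyps]] by blast
next
  case (in_reset x x')
  have "\<exists>a'. red\<^sup>+\<^sup>+ (Reset y) a' \<and> S a' (Reset x')" if "S y x" for y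
    using in_reset.IH[OF that] tranclp_red_plug[of "ResetC Hole"] by (auto intro: tclos.rst)
  with S_Reset_cases_right[OF in_reset.prems] show ?case
    using red_t'_S[OF red.in_reset[OF in_reset.hyps]] by blast
qed

lemma S_normal_form_left:
  "red\<^sup>*\<^sup>* a n \<Longrightarrow> irreducible n \<Longrightarrow> S a b \<Longrightarrow>
    \<exists>m. red\<^sup>*\<^sup>* b m \<and> irreducible m \<and> is_val m = is_val n"
proof (induction arbitrary: b rule: converse_rtranclp_induct)
  case base
  show ?case
  proof (cases "is_val n")
    case True
    then obtain bd where "n = Lam bd" by (auto simp: is_val_iff)
    then obtain bd' where "b = Lam bd'" using S_Lam base.prems(2) by blast
    then show ?thesis using True by (auto simp: irreducible_iff)
  next
    case False
    have "irreducible b"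
      unfolding irreducible_iff
    proof
      assume "\<exists>u. red b u"
      then obtain a' where "red\<^sup>+\<^sup>+ n a'" using S_red_right base.prems(2) by blast
      then show False using base.prems(1) by (auto simp: irreducible_iff dest: tranclpD)
    qed
    moreover have "\<not> is_val b"
    proof
      assume "is_val b"
      then obtain n' where "red\<^sup>=\<^sup>= n n'" "is_val n'" using S_val_right base.prems(2) by blast
      then show False using False base.prems(1) by (auto simp: irreducible_iff)
    qed
    ultimately show ?thesis using False by blast
  qed
next
  case (step a a1)
  from S_red_left[OF step.hyps(1) step.prems(2)] show ?case
  proof
    assume "S a1 b"
    then show ?thesis using step.IH step.prems(1) by blast
  next
    assume "\<exists>b'. red b b' \<and> S a1 b'"
    then obtain b' where "red b b'" "S a1 b'" by blast
    then show ?thesis using step.IH[of b'] step.prems(1)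
      by (meson converse_rtranclp_into_rtranclp)
  qed
qed

lemma S_normal_form_right:
  "red\<^sup>*\<^sup>* b n \<Longrightarrow> irreducible n \<Longrightarrow> closed n \<Longrightarrow> S a b \<Longrightarrow>
    \<exists>m. red\<^sup>*\<^sup>* a m \<and> irreducible m \<and> is_val m = is_val n"
proof (induction arbitrary: a rule: converse_rtranclp_induct)
  case base
  show ?case
  proof (cases "is_val n")
    case True
    then obtain a' where "red\<^sup>=\<^sup>= a a'" "is_val a'" using S_val_right base.prems(3) by blast
    then show ?thesis using True val_no_red by (auto simp: irreducible_iff)
  next
    case False
    with progress[of n] base.prems(1,2) obtain E s where "pure_ctx E" "n = plug E (Shift s)"
      by (auto simp: closed_def irreducible_iff)
    then obtain E' s' where "red\<^sup>*\<^sup>* a (plug E' (Shift s'))" "pure_ctx E'"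
      using S_plug_Shift_right base.prems(3) by blast
    then show ?thesis using False plug_Shift_no_red by (auto simp: irreducible_iff)
  qed
next
  case (step b b1)
  from S_red_right[OF step.hyps(1) step.prems(3)] obtain a1 where "red\<^sup>+\<^sup>+ a a1" "S a1 b1"
    by blast
  then show ?case using step.IH[of a1] step.prems(1,2)
    by (meson rtranclp_trans tranclp_into_rtranclp)
qed

end

definition outcomes :: "trm \<Rightarrow> bool set" where
  "outcomes a = {is_val n | n. evals a n}"

lemma mem_outcomes: "b \<in> outcomes a \<longleftrightarrow> (\<exists>n. red\<^sup>*\<^sup>* a n \<and> irreducible n \<and> is_val n = b)"
  by (auto simp: outcomes_def evals_def step_eq_red)

lemma outcomes_eq_iff:
  "outcomes a = outcomes b \<longleftrightarrow>
    ((\<exists>v. evals a v \<and> is_val v) \<longleftrightarrow> (\<exists>v. evals b v \<and> is_val v)) \<and>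
    ((\<exists>s. evals a s \<and> stuck s) \<longleftrightarrow> (\<exists>s. evals b s \<and> stuck s))"
proof -
  have "True \<in> outcomes a \<longleftrightarrow> (\<exists>v. evals a v \<and> is_val v)" for a
    by (auto simp: outcomes_def)
  moreover have "False \<in> outcomes a \<longleftrightarrow> (\<exists>s. evals a s \<and> stuck s)" for a
    by (auto simp: outcomes_def stuck_def evals_def)
  ultimately show ?thesis
    by (simp add: set_eq_iff all_bool_eq)
qed

lemma ctx_equiv_iff_outcomes:
  "ctx_equiv x y \<longleftrightarrow> (\<forall>C. closed (cplug C x) \<and> closed (cplug C y) \<longrightarrow>
      outcomes (cplug C x) = outcomes (cplug C y))"
  unfolding ctx_equiv_def outcomes_eq_iff ..

lemma red_ctx_equiv:
  assumes "red t t'" and "closed t"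
  shows "ctx_equiv t t'"
proof -
  interpret red_pair t t' using assms by unfold_locales
  have "outcomes (cplug C t) = outcomes (cplug C t')" if closed: "closed (cplug C t')" for C
  proof -
    have S: "S (cplug C t) (cplug C t')" by (rule tclos_cplug) (simp add: tclos.base)
    have "b \<in> outcomes (cplug C t')" if "b \<in> outcomes (cplug C t)" for b
    proof -
      from that obtain n where "red\<^sup>*\<^sup>* (cplug C t) n" "irreducible n" "is_val n = b"
        by (auto simp: mem_outcomes)
      with S_normal_form_left[OF _ _ S] show ?thesis by (auto simp: mem_outcomes)
    qed
    moreover have "b \<in> outcomes (cplug C t)" if "b \<in> outcomes (cplug C t')" for b
    proof -
      from that obtain n where n: "red\<^sup>*\<^sup>* (cplug C t') n" "irreducible n" "is_val n = b"
        by (auto simp: mem_outcomes)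
      moreover have "closed n" using reds_closed n(1) closed by blast
      ultimately show ?thesis using S_normal_form_right[OF _ _ _ S] by (auto simp: mem_outcomes)
    qed
    ultimately show ?thesis by blast
  qed
  then show ?thesis unfolding ctx_equiv_iff_outcomes by blast
qed

lemma ctx_equiv_refl: "ctx_equiv t t"
  by (simp add: ctx_equiv_def)

lemma ctx_equiv_sym: "ctx_equiv x y \<Longrightarrow> ctx_equiv y x"
  unfolding ctx_equiv_def by blast

lemma closed_at_cplug_eq:
  "(\<And>j. closed_at j x = closed_at j y) \<Longrightarrow> closed_at k (cplug C x) = closed_at k (cplug C y)"
  by (induction C arbitrary: k) auto

lemma closed_cplug_iff:
  assumes "closed x" "closed y"
  shows "closed (cplug C x) = closed (cplug C y)"
  unfolding closed_def by (rule closed_at_cplug_eq) (use assms closed_imp_closed_at in blast)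

lemma ctx_equiv_trans:
  "closed x \<Longrightarrow> closed y \<Longrightarrow> closed z \<Longrightarrow> ctx_equiv x y \<Longrightarrow> ctx_equiv y z \<Longrightarrow> ctx_equiv x z"
  unfolding ctx_equiv_iff_outcomes by (metis closed_cplug_iff)

lemma reds_ctx_equiv: "red\<^sup>*\<^sup>* t u \<Longrightarrow> closed t \<Longrightarrow> ctx_equiv t u"
proof (induction rule: rtranclp_induct)
  case (step y z)
  then have "closed y" "closed z" using reds_closed red_closed by blast+
  with step have "ctx_equiv t y" "ctx_equiv y z" using red_ctx_equiv by auto
  with \<open>closed y\<close> \<open>closed z\<close> step.prems show ?case by (blast intro: ctx_equiv_trans)
qed (rule ctx_equiv_refl)

fun ccomp :: "ctx \<Rightarrow> ctx \<Rightarrow> ctx" where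
  "ccomp CHole D = D"
| "ccomp (CLam C) D = CLam (ccomp C D)"
| "ccomp (CAppL C u) D = CAppL (ccomp C D) u"
| "ccomp (CAppR u C) D = CAppR u (ccomp C D)"
| "ccomp (CShift C) D = CShift (ccomp C D)"
| "ccomp (CReset C) D = CReset (ccomp C D)"

lemma cplug_ccomp [simp]: "cplug (ccomp C D) x = cplug C (cplug D x)"
  by (induction C) auto

text \<open>The congruence property is proved for all contexts at once: each constructor of the
  compatible closure is moved into the context, and the two sides of an application are replaced
  one at a time.\<close>

lemma tclos_outcomes:
  assumes R: "closed_rel R" "\<forall>(a, b) \<in> R. ctx_equiv a b"
  shows "tclos R x y \<Longrightarrow> closed (cplug C x) \<Longrightarrow> outcomes (cplug C x) = outcomes (cplug C y)"
proof (induction arbitrary: C rule: tclos.induct)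
  case (base t0 t1)
  then have "closed t0" "closed t1" "ctx_equiv t0 t1" using R by (auto simp: closed_rel_def)
  then show ?case using base.prems closed_cplug_iff ctx_equiv_iff_outcomes by blast
next
  case (lam t0 t1)
  then show ?case using lam.IH[of "ccomp C (CLam CHole)"] by simp
next
  case (app t0 t1 u0 u1)
  have "outcomes (cplug C (App t0 u0)) = outcomes (cplug C (App t1 u0))"
    using app.IH(1)[of "ccomp C (CAppL CHole u0)"] app.prems by simp
  moreover have "closed_at j (App t0 u0) = closed_at j (App t1 u0)" for j
    using tclos_closed_at_eq[OF app.hyps(1) R(1)] by simp
  then have "closed (cplug C (App t1 u0))"
    using app.prems closed_at_cplug_eq unfolding closed_def by blast
  then have "outcomes (cplug C (App t1 u0)) = outcomes (cplug C (App t1 u1))"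
    using app.IH(2)[of "ccomp C (CAppR t1 CHole)"] by simp
  ultimately show ?case by simp
next
  case (shft t0 t1)
  then show ?case using shft.IH[of "ccomp C (CShift CHole)"] by simp
next
  case (rst t0 t1)
  then show ?case using rst.IH[of "ccomp C (CReset CHole)"] by simp
qed simp

lemma tclos_ctx_equiv:
  assumes "closed_rel R" "\<forall>(a, b) \<in> R. ctx_equiv a b" "tclos R x y"
  shows "ctx_equiv x y"
  unfolding ctx_equiv_iff_outcomes using tclos_outcomes[OF assms] by blast

section \<open>Contextual equivalence is an environmental bisimulation\<close>

lemma hat_ctx_closed: "hat R F0 F1 \<Longrightarrow> ctx_closed_at 0 F0 \<and> ctx_closed_at 0 F1"
  by (induction rule: hat.induct) (auto simp: tilde_def closed_def)

lemma hat_tclos: "hat R F0 F1 \<Longrightarrow> tclos R x y \<Longrightarrow> tclos R (plug F0 x) (plug F1 y)"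
  by (induction rule: hat.induct) (auto simp: tilde_def intro: tclos.intros)

lemma ctx_equiv_normal_form:
  assumes "closed t0" "closed t1" "ctx_equiv t0 t1" "normal_form t0"
  obtains n where "steps t1 n" "closed n" "ctx_equiv t0 n" "is_val n = is_val t0"
    "stuck n = stuck t0"
proof -
  have "irreducible t0"
    using assms(4) val_no_red unfolding normal_form_def stuck_def irreducible_iff by blast
  then have "is_val t0 \<in> outcomes t0" by (auto simp: mem_outcomes)
  moreover have "outcomes t0 = outcomes t1"
    using assms(3)[unfolded ctx_equiv_iff_outcomes, rule_format, of CHole] assms(1,2) by simp
  ultimately have "is_val t0 \<in> outcomes t1" by simp
  then obtain n where n: "red\<^sup>*\<^sup>* t1 n" "irreducible n" "is_val n = is_val t0"
    unfolding mem_outcomes by blast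
  have "closed n" using n(1) assms(2) by (rule reds_closed)
  moreover have "ctx_equiv t0 n"
    using ctx_equiv_trans[OF assms(1,2) \<open>closed n\<close> assms(3) reds_ctx_equiv[OF n(1) assms(2)]] .
  moreover have "stuck n = stuck t0" using n \<open>irreducible t0\<close> by (simp add: stuck_def)
  ultimately show thesis using that n by (simp add: step_eq_red)
qed

definition ctx_equiv_envs :: "(trm \<times> trm) set set" where
  "ctx_equiv_envs = {E. environment E \<and> (\<forall>(a, b) \<in> E. ctx_equiv a b)}"

definition ctx_equiv_triples :: "((trm \<times> trm) set \<times> trm \<times> trm) set" where
  "ctx_equiv_triples = {(E, a, b). E \<in> ctx_equiv_envs \<and> closed a \<and> closed b \<and> ctx_equiv a b}"

lemma insert_ctx_equiv_envs:
  "E \<in> ctx_equiv_envs \<Longrightarrow> closed a \<Longrightarrow> closed b \<Longrightarrow> ctx_equiv a b \<Longrightarrow>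
    (is_val a \<and> is_val b) \<or> (stuck a \<and> stuck b) \<Longrightarrow> insert (a, b) E \<in> ctx_equiv_envs"
  by (auto simp: ctx_equiv_envs_def environment_def)

lemma ctx_equiv_envs_tclos:
  assumes "E \<in> ctx_equiv_envs" "tclos E x y" "closed x" "closed y"
  shows "(E, x, y) \<in> ctx_equiv_triples"
proof -
  have "closed_rel E" "\<forall>(a, b) \<in> E. ctx_equiv a b"
    using assms(1) by (auto simp: ctx_equiv_envs_def environment_def closed_rel_def)
  then show ?thesis
    using assms tclos_ctx_equiv by (auto simp: ctx_equiv_triples_def)
qed

lemma ctx_equiv_triples_reds:
  assumes "(E, a0, a1) \<in> ctx_equiv_triples" "red\<^sup>*\<^sup>* a0 r0" "red\<^sup>*\<^sup>* a1 r1"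
  shows "(E, r0, r1) \<in> ctx_equiv_triples"
proof -
  from assms(1) have "closed a0" "closed a1" "ctx_equiv a0 a1"
    by (auto simp: ctx_equiv_triples_def)
  moreover from this assms(2,3) have "closed r0" "closed r1" "ctx_equiv r0 a0" "ctx_equiv a1 r1"
    using reds_closed reds_ctx_equiv ctx_equiv_sym by blast+
  ultimately have "ctx_equiv r0 r1" by (blast intro: ctx_equiv_trans)
  then show ?thesis
    using assms(1) \<open>closed r0\<close> \<open>closed r1\<close> by (auto simp: ctx_equiv_triples_def)
qed

lemma ctx_equiv_triples_normal_form:
  assumes "(E, t0, t1) \<in> ctx_equiv_triples" "normal_form t0"
  shows "\<exists>n. steps t1 n \<and> insert (t0, n) E \<in> ctx_equiv_envs \<and>
    is_val n = is_val t0 \<and> stuck n = stuck t0"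
proof -
  from assms(1) have "E \<in> ctx_equiv_envs" "closed t0" "closed t1" "ctx_equiv t0 t1"
    by (auto simp: ctx_equiv_triples_def)
  with assms(2) obtain n where n: "steps t1 n" "closed n" "ctx_equiv t0 n"
    "is_val n = is_val t0" "stuck n = stuck t0"
    using ctx_equiv_normal_form by metis
  have "insert (t0, n) E \<in> ctx_equiv_envs"
    using insert_ctx_equiv_envs[OF \<open>E \<in> ctx_equiv_envs\<close> \<open>closed t0\<close> n(2,3)] n(4,5) assms(2)
    unfolding normal_form_def by blast
  with n show ?thesis by blast
qed

lemma insert_swap_ctx_equiv_envs:
  "insert (a, b) E \<in> ctx_equiv_envs \<Longrightarrow> E \<in> ctx_equiv_envs \<Longrightarrow> insert (b, a) E \<in> ctx_equiv_envs"
  by (auto simp: ctx_equiv_envs_def environment_def ctx_equiv_sym)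

lemma ctx_equiv_triples_beta:
  assumes E: "E \<in> ctx_equiv_envs"
    and "(Lam b0, Lam b1) \<in> E" "(v0, v1) \<in> tilde E" "is_val v0" "is_val v1"
  shows "(E, subst0 b0 v0, subst0 b1 v1) \<in> ctx_equiv_triples"
proof -
  from assms have "tclos E (App (Lam b0) v0) (App (Lam b1) v1)"
    "closed (App (Lam b0) v0)" "closed (App (Lam b1) v1)"
    by (auto simp: tilde_def ctx_equiv_envs_def environment_def closed_def intro: tclos.intros)
  then show ?thesis
    using assms(4,5) by (auto intro: ctx_equiv_triples_reds ctx_equiv_envs_tclos[OF E] red.beta)
qed

lemma ctx_equiv_triples_shift:
  assumes E: "E \<in> ctx_equiv_envs"
    and "pure_ctx E0" "pure_ctx E1" "(plug E0 (Shift s0), plug E1 (Shift s1)) \<in> E"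
    and "pure_ctx E0'" "pure_ctx E1'" "hat E E0' E1'"
  shows "(E, Reset (subst0 s0 (Lam (Reset (plug (lift_ctx 0 E0') (plug (lift_ctx 0 E0) (Var 0)))))),
      Reset (subst0 s1 (Lam (Reset (plug (lift_ctx 0 E1') (plug (lift_ctx 0 E1) (Var 0)))))))
      \<in> ctx_equiv_triples" (is "(E, ?r0, ?r1) \<in> _")
proof -
  let ?a0 = "Reset (plug (ecomp E0' E0) (Shift s0))"
  let ?a1 = "Reset (plug (ecomp E1' E1) (Shift s1))"
  from assms have "tclos E ?a0 ?a1" "closed ?a0" "closed ?a1"
    using hat_ctx_closed
    by (auto simp: ctx_equiv_envs_def environment_def closed_def
        intro: tclos.rst hat_tclos tclos.base)
  then have "(E, ?a0, ?a1) \<in> ctx_equiv_triples" by (rule ctx_equiv_envs_tclos[OF E])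
  moreover have "red ?a0 ?r0" "red ?a1 ?r1"
    using red.shift[OF pure_ctx_ecomp[OF assms(5,2)], of s0]
      red.shift[OF pure_ctx_ecomp[OF assms(6,3)], of s1] by simp_all
  ultimately show ?thesis by (blast intro: ctx_equiv_triples_reds)
qed

lemma env_bisim_ctx_equiv: "env_bisim (ctx_equiv_envs, ctx_equiv_triples)"
  unfolding env_bisim_def fst_conv snd_conv
proof (intro conjI allI impI ballI)
  show "env_relation (ctx_equiv_envs, ctx_equiv_triples)"
    by (auto simp: env_relation_def ctx_equiv_triples_def ctx_equiv_envs_def)
next
  fix E t0 t1 t0'
  assume "(E, t0, t1) \<in> ctx_equiv_triples" "step t0 t0'"
  then have "(E, t0', t1) \<in> ctx_equiv_triples"
    by (auto simp: step_eq_red intro: ctx_equiv_triples_reds)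
  then show "\<exists>t1'. steps t1 t1' \<and> (E, t0', t1') \<in> ctx_equiv_triples" by blast
next
  fix E t0 t1
  assume "(E, t0, t1) \<in> ctx_equiv_triples" "is_val t0"
  then show "\<exists>v1. steps t1 v1 \<and> is_val v1 \<and> insert (t0, v1) E \<in> ctx_equiv_envs"
    using ctx_equiv_triples_normal_form[of E t0 t1] by (auto simp: normal_form_def)
next
  fix E t0 t1
  assume "(E, t0, t1) \<in> ctx_equiv_triples" "stuck t0"
  then show "\<exists>t1'. steps t1 t1' \<and> stuck t1' \<and> insert (t0, t1') E \<in> ctx_equiv_envs"
    using ctx_equiv_triples_normal_form[of E t0 t1] by (auto simp: normal_form_def)
next
  fix E t0 t1 t1'
  assume "(E, t0, t1) \<in> ctx_equiv_triples" "step t1 t1'"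
  then have "(E, t0, t1') \<in> ctx_equiv_triples"
    by (auto simp: step_eq_red intro: ctx_equiv_triples_reds)
  then show "\<exists>t0'. steps t0 t0' \<and> (E, t0', t1') \<in> ctx_equiv_triples" by blast
next
  fix E t0 t1
  assume "(E, t0, t1) \<in> ctx_equiv_triples" "is_val t1"
  then have "E \<in> ctx_equiv_envs" "(E, t1, t0) \<in> ctx_equiv_triples"
    by (auto simp: ctx_equiv_triples_def ctx_equiv_sym)
  with \<open>is_val t1\<close> show "\<exists>v0. steps t0 v0 \<and> is_val v0 \<and> insert (v0, t1) E \<in> ctx_equiv_envs"
    using ctx_equiv_triples_normal_form[of E t1 t0] insert_swap_ctx_equiv_envs
    by (fastforce simp: normal_form_def)
next
  fix E t0 t1
  assume "(E, t0, t1) \<in> ctx_equiv_triples" "stuck t1"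
  then have "E \<in> ctx_equiv_envs" "(E, t1, t0) \<in> ctx_equiv_triples"
    by (auto simp: ctx_equiv_triples_def ctx_equiv_sym)
  with \<open>stuck t1\<close> show "\<exists>t0'. steps t0 t0' \<and> stuck t0' \<and> insert (t0', t1) E \<in> ctx_equiv_envs"
    using ctx_equiv_triples_normal_form[of E t1 t0] insert_swap_ctx_equiv_envs
    by (fastforce simp: normal_form_def)
next
  fix E b0 b1 v0 v1
  assume "E \<in> ctx_equiv_envs"
    and "(Lam b0, Lam b1) \<in> E \<and> (v0, v1) \<in> tilde E \<and> is_val v0 \<and> is_val v1"
  then show "(E, subst0 b0 v0, subst0 b1 v1) \<in> ctx_equiv_triples"
    by (blast intro: ctx_equiv_triples_beta)
next
  fix E E0 E1 s0 s1 E0' E1'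
  assume "E \<in> ctx_equiv_envs"
    and "pure_ctx E0 \<and> pure_ctx E1 \<and> (plug E0 (Shift s0), plug E1 (Shift s1)) \<in> E \<and>
      pure_ctx E0' \<and> pure_ctx E1' \<and> hat E E0' E1'"
  then show "(E, Reset (subst0 s0 (Lam (Reset (plug (lift_ctx 0 E0') (plug (lift_ctx 0 E0) (Var 0)))))),
      Reset (subst0 s1 (Lam (Reset (plug (lift_ctx 0 E1') (plug (lift_ctx 0 E1) (Var 0)))))))
      \<in> ctx_equiv_triples"
    by (blast intro: ctx_equiv_triples_shift)
qed

theorem theorem1:
  assumes "closed t0" and "closed t1" and "ctx_equiv t0 t1"
  shows "env_bisimilar {} t0 t1"
proof -
  have "({}, t0, t1) \<in> ctx_equiv_triples"
    using assms by (simp add: ctx_equiv_triples_def ctx_equiv_envs_def environment_def)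
  then show ?thesis
    using env_bisim_ctx_equiv unfolding env_bisimilar_def by auto
qed

end
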